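(* Let $G$ be a quiver with $n \geq 1$ vertices, let $\lambda_1 \leq \lambda_2 \leq \cdots \leq \lambda_n$ be the eigenvalues of its Kirchhoff matrix $K$ (listed with multiplicity), and let $d_1 \leq d_2 \leq \cdots \leq d_n$ be its vertex degrees in increasing order, with the convention $d_0 = 0$. Then $\lambda_k \leq d_k + d_{k-1}$ for all $1 \leq k \leq n$.
   Context: A quiver $G=(V,E)$ consists of a finite vertex set $V=\{1,\dots,n\}$ and a finite list (multiset) $E$ of pairs $(v,w)\in V\times V$; repeated edges (multiple connections) and self-loops $(v,v)$ are allowed, and orientation of edges is irrelevant. The adjacency matrix $A$ is the symmetric $n\times n$ matrix with zero diagonal whose entry $A_{ij}$ ($i\neq j$) is the number of entries of $E$ equal to $(i,j)$ or $(j,i)$. The degree $d(i)$ of vertex $i$ is the number of entries $(v,w)$ of $E$ (counted with multiplicity) with $v=i$ or $w=i$; in particular a loop at $i$ contributes $1$ to $d(i)$. $B$ is the diagonal matrix of degrees, and the Kirchhoff matrix is $K=B-A$ (a real symmetric matrix). *)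

theory Defs
  imports "Jordan_Normal_Form.Char_Poly"
begin

text \<open>A quiver on the vertex set {0..<n} (0-based rendering of {1..n}) is given by
  a list E of pairs of vertices; repeated edges and loops are allowed.\<close>

definition quiver :: "nat \<Rightarrow> (nat \<times> nat) list \<Rightarrow> bool" where
  "quiver n E \<longleftrightarrow> (\<forall>(v,w) \<in> set E. v < n \<and> w < n)"

definition qdegree :: "(nat \<times> nat) list \<Rightarrow> nat \<Rightarrow> nat" where
  "qdegree E i = length (filter (\<lambda>(v,w). v = i \<or> w = i) E)"

definition adj_mat :: "nat \<Rightarrow> (nat \<times> nat) list \<Rightarrow> real mat" where
  "adj_mat n E = mat n n (\<lambda>(i,j). if i = j then 0
      else real (length (filter (\<lambda>e. e = (i,j) \<or> e = (j,i)) E)))"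

definition deg_mat :: "nat \<Rightarrow> (nat \<times> nat) list \<Rightarrow> real mat" where
  "deg_mat n E = mat n n (\<lambda>(i,j). if i = j then real (qdegree E i) else 0)"

definition kirchhoff :: "nat \<Rightarrow> (nat \<times> nat) list \<Rightarrow> real mat" where
  "kirchhoff n E = deg_mat n E - adj_mat n E"

text \<open>Vertex degrees in increasing order (0-based list: entry k-1 is d_k).\<close>
definition sorted_degrees :: "nat \<Rightarrow> (nat \<times> nat) list \<Rightarrow> nat list" where
  "sorted_degrees n E = sort (map (qdegree E) [0..<n])"

text \<open>ls lists the eigenvalues of the square matrix M with multiplicity, in
  increasing order: ls is sorted and the characteristic polynomial of M is
  the product of (X - l) over l in ls.\<close>
definition sorted_eigenvalues :: "real mat \<Rightarrow> real list \<Rightarrow> bool" where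
  "sorted_eigenvalues M ls \<longleftrightarrow> sorted ls \<and> length ls = dim_row M \<and>
     char_poly M = (\<Prod>l\<leftarrow>ls. [:- l, 1:])"

end

theory Submission
  imports Defs "Jordan_Normal_Form.Schur_Decomposition"
begin

text \<open>Let \<open>T\<close> be a set of \<open>k\<close> vertices of smallest degree. Some nonzero \<open>x\<close> supported on \<open>T\<close>
  is orthogonal to the eigenvectors of \<open>\<lambda>\<^sub>1, \<dots>, \<lambda>\<^sub>k\<^sub>-\<^sub>1\<close>, so \<open>\<lambda>\<^sub>k |x|\<^sup>2 \<le> x\<^sup>T K x\<close>.
  On the other hand \<open>x\<^sup>T K x\<close> is the sum over the edges \<open>(v,w)\<close> of \<open>(x\<^sub>v - x\<^sub>w)\<^sup>2\<close>, and
  \<open>(x\<^sub>v - x\<^sub>w)\<^sup>2 \<le> (d\<^sub>v + d\<^sub>w) (x\<^sub>v\<^sup>2/d\<^sub>v + x\<^sub>w\<^sup>2/d\<^sub>w)\<close> by Cauchy-Schwarz. Summing over the edges,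
  every vertex \<open>v\<close> collects \<open>d\<^sub>v\<close> copies of \<open>x\<^sub>v\<^sup>2/d\<^sub>v\<close>, and two distinct vertices of \<open>T\<close> have
  degree sum at most \<open>d\<^sub>k + d\<^sub>k\<^sub>-\<^sub>1\<close>; hence \<open>x\<^sup>T K x \<le> (d\<^sub>k + d\<^sub>k\<^sub>-\<^sub>1) |x|\<^sup>2\<close>.
  The orthonormal eigenbasis of the symmetric matrix \<open>K\<close> is obtained by Gram-Schmidt
  orthonormalisation of the basis in which \<open>K\<close> is upper triangular (Schur decomposition).\<close>

definition dot :: "nat \<Rightarrow> (nat \<Rightarrow> real) \<Rightarrow> (nat \<Rightarrow> real) \<Rightarrow> real" where
  "dot n x y = (\<Sum>i=0..<n. x i * y i)"

definition matvec :: "nat \<Rightarrow> (nat \<Rightarrow> nat \<Rightarrow> real) \<Rightarrow> (nat \<Rightarrow> real) \<Rightarrow> nat \<Rightarrow> real" where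
  "matvec n a x i = (\<Sum>j=0..<n. a i j * x j)"

lemma dot_commute: "dot n x y = dot n y x"
  unfolding dot_def by (simp add: mult.commute)

lemma dot_cong:
  "(\<And>i. i < n \<Longrightarrow> x i = x' i) \<Longrightarrow> (\<And>i. i < n \<Longrightarrow> y i = y' i) \<Longrightarrow> dot n x y = dot n x' y'"
  unfolding dot_def by (rule sum.cong) auto

lemma dot_sum_left:
  "finite L \<Longrightarrow> dot n (\<lambda>i. \<Sum>l\<in>L. c l * q l i) z = (\<Sum>l\<in>L. c l * dot n (q l) z)"
  unfolding dot_def by (simp add: sum_distrib_left sum_distrib_right mult.assoc sum.swap[of _ L])

lemma dot_sum_right:
  "finite L \<Longrightarrow> dot n z (\<lambda>i. \<Sum>l\<in>L. c l * q l i) = (\<Sum>l\<in>L. c l * dot n z (q l))"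
  using dot_sum_left[of L n c q z] by (simp add: dot_commute)

lemma dot_diff_left: "dot n (\<lambda>i. x i - y i) z = dot n x z - dot n y z"
  unfolding dot_def by (simp add: left_diff_distrib sum_subtractf)

lemma dot_diff_right: "dot n z (\<lambda>i. x i - y i) = dot n z x - dot n z y"
  unfolding dot_def by (simp add: right_diff_distrib sum_subtractf)

lemma dot_add_left: "dot n (\<lambda>i. x i + y i) z = dot n x z + dot n y z"
  unfolding dot_def by (simp add: distrib_right sum.distrib)

lemma dot_scale_left: "dot n (\<lambda>i. c * x i) z = c * dot n x z"
  unfolding dot_def by (simp add: sum_distrib_left mult.assoc)

lemma dot_scale_right: "dot n z (\<lambda>i. c * x i) = c * dot n z x"
  unfolding dot_def by (simp add: sum_distrib_left mult.left_commute)

lemma dot_self_nonneg: "dot n x x \<ge> 0"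
  unfolding dot_def by (rule sum_nonneg) auto

lemma dot_self_pos:
  assumes "i < n" "x i \<noteq> 0"
  shows "dot n x x > 0"
proof -
  have "dot n x x \<noteq> 0"
    using assms unfolding dot_def by (subst sum_nonneg_eq_0_iff) auto
  then show ?thesis using dot_self_nonneg[of n x] by linarith
qed

lemma matvec_cong: "(\<And>j. j < n \<Longrightarrow> x j = x' j) \<Longrightarrow> matvec n a x i = matvec n a x' i"
  unfolding matvec_def by (intro sum.cong) auto

lemma matvec_sum:
  "finite L \<Longrightarrow> matvec n a (\<lambda>i. \<Sum>l\<in>L. c l * q l i) i = (\<Sum>l\<in>L. c l * matvec n a (q l) i)"
  unfolding matvec_def by (simp add: sum_distrib_left mult.left_commute sum.swap[of _ L])

lemma matvec_diff: "matvec n a (\<lambda>i. x i - y i) i = matvec n a x i - matvec n a y i"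
  unfolding matvec_def by (simp add: right_diff_distrib sum_subtractf)

lemma matvec_scale: "matvec n a (\<lambda>i. c * x i) i = c * matvec n a x i"
  unfolding matvec_def by (simp add: sum_distrib_left mult.left_commute)

lemma dot_matvec_symmetric:
  assumes "\<forall>i<n. \<forall>j<n. a i j = a j i"
  shows "dot n x (matvec n a y) = dot n (matvec n a x) y"
proof -
  have "dot n x (matvec n a y) = (\<Sum>i=0..<n. \<Sum>j=0..<n. x i * a i j * y j)"
    unfolding dot_def matvec_def by (simp add: sum_distrib_left mult.assoc)
  also have "\<dots> = (\<Sum>j=0..<n. \<Sum>i=0..<n. x i * a i j * y j)" by (rule sum.swap)
  also have "\<dots> = (\<Sum>j=0..<n. \<Sum>i=0..<n. a j i * x i * y j)"
    using assms by (intro sum.cong refl) (auto simp: mult.commute)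
  also have "\<dots> = dot n (matvec n a x) y"
    unfolding dot_def matvec_def by (simp add: sum_distrib_right)
  finally show ?thesis .
qed

definition orthonormal :: "nat \<Rightarrow> nat \<Rightarrow> (nat \<Rightarrow> nat \<Rightarrow> real) \<Rightarrow> bool" where
  "orthonormal n j q \<longleftrightarrow> (\<forall>l<j. \<forall>m<j. dot n (q l) (q m) = (if l = m then 1 else 0))"

lemma orthonormal_coeff:
  assumes "orthonormal n j q" "m < j" "\<And>i. i < n \<Longrightarrow> x i = (\<Sum>l=0..<j. c l * q l i)"
  shows "dot n x (q m) = c m"
proof -
  have "dot n x (q m) = dot n (\<lambda>i. \<Sum>l=0..<j. c l * q l i) (q m)"
    using assms(3) by (intro dot_cong) auto
  also have "\<dots> = (\<Sum>l=0..<j. c l * dot n (q l) (q m))"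
    by (rule dot_sum_left) auto
  also have "\<dots> = (\<Sum>l=0..<j. if l = m then c l else 0)"
    using assms(1,2) unfolding orthonormal_def by (intro sum.cong refl) auto
  also have "\<dots> = c m" using assms(2) by simp
  finally show ?thesis .
qed

lemma orthonormal_extend:
  assumes "orthonormal n j q" "\<forall>m<j. dot n (q m) u = 0" "dot n u u = 1"
  shows "orthonormal n (Suc j) (q(j := u))"
  unfolding orthonormal_def
proof (intro allI impI)
  fix l m assume "l < Suc j" "m < Suc j"
  then consider "l < j" "m < j" | "l = j" "m < j" | "l < j" "m = j" | "l = j" "m = j"
    by linarith
  then show "dot n ((q(j := u)) l) ((q(j := u)) m) = (if l = m then 1 else 0)"
    by cases (use assms in \<open>auto simp: orthonormal_def dot_commute\<close>)
qed

section \<open>An orthonormal eigenbasis of a real symmetric matrix\<close>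

definition gs_residual :: "nat \<Rightarrow> nat \<Rightarrow> (nat \<Rightarrow> nat \<Rightarrow> real) \<Rightarrow> (nat \<Rightarrow> real) \<Rightarrow> nat \<Rightarrow> real" where
  "gs_residual n j q p i = p i - (\<Sum>l=0..<j. dot n p (q l) * q l i)"

lemma gs_residual_orthogonal:
  assumes "orthonormal n j q" "m < j"
  shows "dot n (q m) (gs_residual n j q p) = 0"
proof -
  have "dot n (\<lambda>i. \<Sum>l=0..<j. dot n p (q l) * q l i) (q m) = dot n p (q m)"
    by (rule orthonormal_coeff[OF assms]) simp
  then show ?thesis
    unfolding gs_residual_def[abs_def] dot_diff_right
    by (simp add: dot_commute[of n "q m"])
qed

lemma eigenvector_of_orthogonal_residual:
  assumes sym: "\<forall>i<n. \<forall>j<n. a i j = a j i"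
    and orth: "orthonormal n j q"
    and eig: "\<forall>l<j. \<forall>i<n. matvec n a (q l) i = es l * q l i"
    and perp: "\<forall>m<j. dot n (q m) y = 0"
    and span: "\<forall>i<n. matvec n a y i - \<mu> * y i = (\<Sum>l=0..<j. g l * q l i)"
  shows "\<forall>i<n. matvec n a y i = \<mu> * y i"
proof -
  have "g m = 0" if m: "m < j" for m
  proof -
    have "g m = dot n (\<lambda>i. matvec n a y i - \<mu> * y i) (q m)"
      using span by (intro orthonormal_coeff[OF orth m, symmetric]) auto
    also have "\<dots> = dot n (matvec n a y) (q m) - \<mu> * dot n y (q m)"
      by (simp add: dot_diff_left dot_scale_left)
    also have "dot n (matvec n a y) (q m) = dot n y (matvec n a (q m))"
      by (simp add: dot_matvec_symmetric[OF sym])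
    also have "\<dots> = dot n y (\<lambda>i. es m * q m i)"
      using eig m by (intro dot_cong) auto
    finally show ?thesis
      using perp m dot_commute[of n y "q m"] by (simp add: dot_scale_right)
  qed
  then show ?thesis using span by simp
qed

lemma gs_residual_schur_span:
  assumes eig: "\<forall>l<j. \<forall>i<n. matvec n a (q l) i = es l * q l i"
    and expand: "\<forall>t<j. \<forall>i<n. p t i = (\<Sum>l=0..<j. dot n (p t) (q l) * q l i)"
    and schur: "\<forall>i<n. matvec n a (p j) i = es j * p j i + (\<Sum>s=0..<j. b s * p s i)"
  defines "y \<equiv> gs_residual n j q (p j)"
  shows "\<exists>g. \<forall>i<n. matvec n a y i - es j * y i = (\<Sum>l=0..<j. g l * q l i)"
proof -
  define co where "co l = dot n (p j) (q l)" for l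
  define g where "g l = (\<Sum>s=0..<j. b s * dot n (p s) (q l)) + (es j - es l) * co l" for l
  have "matvec n a y i - es j * y i = (\<Sum>l=0..<j. g l * q l i)" if i: "i < n" for i
  proof -
    have "(\<Sum>s=0..<j. b s * p s i) = (\<Sum>s=0..<j. \<Sum>l=0..<j. b s * dot n (p s) (q l) * q l i)"
      using expand i by (auto simp: sum_distrib_left mult.assoc intro!: sum.cong)
    also have "\<dots> = (\<Sum>l=0..<j. (\<Sum>s=0..<j. b s * dot n (p s) (q l)) * q l i)"
      by (subst sum.swap) (simp add: sum_distrib_right)
    finally have lower: "(\<Sum>s=0..<j. b s * p s i) = \<dots>" .
    have "matvec n a y i = matvec n a (p j) i - (\<Sum>l=0..<j. co l * matvec n a (q l) i)"
      unfolding y_def gs_residual_def[abs_def] co_def by (simp add: matvec_diff matvec_sum)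
    also have "(\<Sum>l=0..<j. co l * matvec n a (q l) i) = (\<Sum>l=0..<j. co l * es l * q l i)"
      using eig i by (intro sum.cong refl) auto
    finally have "matvec n a y i - es j * y i = (\<Sum>s=0..<j. b s * p s i)
        + (\<Sum>l=0..<j. es j * co l * q l i) - (\<Sum>l=0..<j. co l * es l * q l i)"
      using schur i unfolding y_def gs_residual_def co_def
      by (simp add: right_diff_distrib sum_distrib_left mult.assoc)
    also have "\<dots> = (\<Sum>l=0..<j. g l * q l i)"
      unfolding lower g_def
      by (simp add: algebra_simps sum.distrib sum_subtractf)
    finally show ?thesis .
  qed
  then show ?thesis by blast
qed

lemma gs_residual_dual:
  assumes dual: "\<forall>r<n. \<forall>t<n. (\<Sum>m=0..<n. qi r m * p t m) = (if r = t then 1 else 0)"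
    and tri: "\<forall>l<j. \<forall>r. l < r \<and> r < n \<longrightarrow> (\<Sum>m=0..<n. qi r m * q l m) = 0"
    and r: "j \<le> r" "r < n"
  shows "(\<Sum>m=0..<n. qi r m * gs_residual n j q (p j) m) = (if r = j then 1 else 0)"
proof -
  have "(\<Sum>m=0..<n. qi r m * gs_residual n j q (p j) m) = (\<Sum>m=0..<n. qi r m * p j m)
      - (\<Sum>l=0..<j. dot n (p j) (q l) * (\<Sum>m=0..<n. qi r m * q l m))"
    unfolding gs_residual_def
    by (simp add: right_diff_distrib sum_subtractf sum_distrib_left mult.left_commute
        sum.swap[of _ "{0..<j}"])
  also have "(\<Sum>l=0..<j. dot n (p j) (q l) * (\<Sum>m=0..<n. qi r m * q l m)) = 0"
    using tri r by (intro sum.neutral) auto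
  finally show ?thesis using dual r by simp
qed

lemma orthonormal_expansion_extend:
  assumes expand: "\<forall>t<j. \<forall>i<n. p t i = (\<Sum>l=0..<j. dot n (p t) (q l) * q l i)"
    and perp: "\<forall>m<j. dot n (q m) u = 0" and unit: "dot n u u = 1"
    and pj: "\<forall>i<n. p j i = s * u i + (\<Sum>l=0..<j. dot n (p j) (q l) * q l i)"
  shows "\<forall>t<Suc j. \<forall>i<n. p t i = (\<Sum>l=0..<Suc j. dot n (p t) ((q(j := u)) l) * (q(j := u)) l i)"
proof (intro allI impI)
  fix t i assume t: "t < Suc j" and i: "i < n"
  have coeff_u: "dot n (p t) u = (if t = j then s else 0)"
  proof (cases "t = j")
    case True
    have "dot n (p j) u = dot n (\<lambda>i. s * u i + (\<Sum>l=0..<j. dot n (p j) (q l) * q l i)) u"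
      using pj by (intro dot_cong) auto
    also have "\<dots> = s * dot n u u + (\<Sum>l=0..<j. dot n (p j) (q l) * dot n (q l) u)"
      by (simp add: dot_add_left dot_scale_left dot_sum_left)
    finally show ?thesis using True unit perp by simp
  next
    case False
    then have "t < j" using t by simp
    have "dot n (p t) u = dot n (\<lambda>i. \<Sum>l=0..<j. dot n (p t) (q l) * q l i) u"
      using expand \<open>t < j\<close> by (intro dot_cong) auto
    also have "\<dots> = 0" using perp by (simp add: dot_sum_left)
    finally show ?thesis using False by simp
  qed
  have "(\<Sum>l=0..<j. dot n (p t) ((q(j := u)) l) * (q(j := u)) l i)
      = (\<Sum>l=0..<j. dot n (p t) (q l) * q l i)"
    by (intro sum.cong) auto
  then show "p t i = (\<Sum>l=0..<Suc j. dot n (p t) ((q(j := u)) l) * (q(j := u)) l i)"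
    using coeff_u expand pj t i by (cases "t = j") auto
qed

lemma unit_rescale:
  assumes "dot n y y > 0"
  obtains s u where "s > 0" "dot n u u = 1" "y = (\<lambda>i. s * u i)"
proof -
  define s where "s = sqrt (dot n y y)"
  have s: "s > 0" "s * s = dot n y y" using assms unfolding s_def by auto
  have "dot n (\<lambda>i. inverse s * y i) (\<lambda>i. inverse s * y i) = 1"
    unfolding dot_scale_left dot_scale_right s(2)[symmetric] using s(1) by (simp add: field_simps)
  moreover have "y = (\<lambda>i. s * (inverse s * y i))" using s(1) by (simp add: fun_eq_iff)
  ultimately show ?thesis using that s(1) by blast
qed

text \<open>\<open>q\<^sub>0, \<dots>, q\<^sub>j\<^sub>-\<^sub>1\<close> is the Gram-Schmidt orthonormalisation of the first \<open>j\<close> columns \<open>p\<close>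
  of the Schur basis, and \<open>qi\<close> is the dual basis (the rows of the inverse of \<open>p\<close>). The last
  condition records that \<open>q\<^sub>l\<close> lies in the span of \<open>p\<^sub>0, \<dots>, p\<^sub>l\<close>, which guarantees that the
  next Gram-Schmidt residual is nonzero.\<close>

definition eigenprefix ::
    "nat \<Rightarrow> (nat \<Rightarrow> nat \<Rightarrow> real) \<Rightarrow> (nat \<Rightarrow> real) \<Rightarrow> (nat \<Rightarrow> nat \<Rightarrow> real) \<Rightarrow>
     (nat \<Rightarrow> nat \<Rightarrow> real) \<Rightarrow> nat \<Rightarrow> (nat \<Rightarrow> nat \<Rightarrow> real) \<Rightarrow> bool" where
  "eigenprefix n a es p qi j q \<longleftrightarrow> orthonormal n j q \<and>
     (\<forall>l<j. \<forall>i<n. matvec n a (q l) i = es l * q l i) \<and>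
     (\<forall>t<j. \<forall>i<n. p t i = (\<Sum>l=0..<j. dot n (p t) (q l) * q l i)) \<and>
     (\<forall>l<j. \<forall>r. l < r \<and> r < n \<longrightarrow> (\<Sum>m=0..<n. qi r m * q l m) = 0)"

lemma eigenprefix_Suc:
  assumes sym: "\<forall>i<n. \<forall>j<n. a i j = a j i"
    and dual: "\<forall>r<n. \<forall>t<n. (\<Sum>m=0..<n. qi r m * p t m) = (if r = t then 1 else 0)"
    and schur: "\<forall>t<n. \<forall>i<n. matvec n a (p t) i = es t * p t i + (\<Sum>s=0..<t. b s t * p s i)"
    and j: "j < n" and prefix: "eigenprefix n a es p qi j q"
  shows "\<exists>u. eigenprefix n a es p qi (Suc j) (q(j := u))"
proof -
  from prefix have orth: "orthonormal n j q"
    and eig: "\<forall>l<j. \<forall>i<n. matvec n a (q l) i = es l * q l i"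
    and expand: "\<forall>t<j. \<forall>i<n. p t i = (\<Sum>l=0..<j. dot n (p t) (q l) * q l i)"
    and tri: "\<forall>l<j. \<forall>r. l < r \<and> r < n \<longrightarrow> (\<Sum>m=0..<n. qi r m * q l m) = 0"
    unfolding eigenprefix_def by auto
  define y where "y = gs_residual n j q (p j)"
  have perp_y: "\<forall>m<j. dot n (q m) y = 0"
    using gs_residual_orthogonal[OF orth] unfolding y_def by blast
  have dual_y: "(\<Sum>m=0..<n. qi r m * y m) = (if r = j then 1 else 0)" if "j \<le> r" "r < n" for r
    unfolding y_def using gs_residual_dual[OF dual tri that] .
  have "\<exists>i<n. y i \<noteq> 0"
  proof (rule ccontr)
    assume "\<not> (\<exists>i<n. y i \<noteq> 0)"
    then have "(\<Sum>m=0..<n. qi j m * y m) = 0" by simp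
    then show False using dual_y[of j] j by simp
  qed
  then have y_pos: "dot n y y > 0" using dot_self_pos by blast
  have "\<forall>i<n. matvec n a (p j) i = es j * p j i + (\<Sum>s=0..<j. b s j * p s i)"
    using schur j by simp
  from gs_residual_schur_span[OF eig expand this, folded y_def] obtain g
    where "\<forall>i<n. matvec n a y i - es j * y i = (\<Sum>l=0..<j. g l * q l i)" by blast
  from eigenvector_of_orthogonal_residual[OF sym orth eig perp_y this]
  have eig_y: "\<forall>i<n. matvec n a y i = es j * y i" .
  obtain s u where s: "s > 0" and unit: "dot n u u = 1" and y_u: "y = (\<lambda>i. s * u i)"
    using unit_rescale[OF y_pos] by blast
  have perp_u: "\<forall>m<j. dot n (q m) u = 0"
    using perp_y s unfolding y_u dot_scale_right by simp
  have "orthonormal n (Suc j) (q(j := u))"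
    by (rule orthonormal_extend[OF orth perp_u unit])
  moreover have "matvec n a u i = es j * u i" if "i < n" for i
    using eig_y that s unfolding y_u matvec_scale by (simp add: mult.left_commute)
  then have "\<forall>l<Suc j. \<forall>i<n. matvec n a ((q(j := u)) l) i = es l * (q(j := u)) l i"
    using eig by (auto simp: less_Suc_eq)
  moreover have "p j i = s * u i + (\<Sum>l=0..<j. dot n (p j) (q l) * q l i)" for i
    using fun_cong[OF y_u, of i] unfolding y_def gs_residual_def by simp
  then have "\<forall>t<Suc j. \<forall>i<n. p t i =
      (\<Sum>l=0..<Suc j. dot n (p t) ((q(j := u)) l) * (q(j := u)) l i)"
    using orthonormal_expansion_extend[OF expand perp_u unit] by blast
  moreover have "(\<Sum>m=0..<n. qi r m * u m) = 0" if "j < r" "r < n" for r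
  proof -
    have "s * (\<Sum>m=0..<n. qi r m * u m) = (\<Sum>m=0..<n. qi r m * y m)"
      unfolding y_u by (simp add: sum_distrib_left mult_ac)
    then show ?thesis using dual_y[of r] that s by simp
  qed
  then have "\<forall>l<Suc j. \<forall>r. l < r \<and> r < n \<longrightarrow> (\<Sum>m=0..<n. qi r m * (q(j := u)) l m) = 0"
    using tri by (auto simp: less_Suc_eq)
  ultimately show ?thesis unfolding eigenprefix_def by blast
qed

lemma eigenprefix_exists:
  assumes "\<forall>i<n. \<forall>j<n. a i j = a j i"
    and "\<forall>r<n. \<forall>t<n. (\<Sum>m=0..<n. qi r m * p t m) = (if r = t then 1 else 0)"
    and "\<forall>t<n. \<forall>i<n. matvec n a (p t) i = es t * p t i + (\<Sum>s=0..<t. b s t * p s i)"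
  shows "j \<le> n \<Longrightarrow> \<exists>q. eigenprefix n a es p qi j q"
proof (induction j)
  case 0
  show ?case by (simp add: eigenprefix_def orthonormal_def)
next
  case (Suc j)
  then obtain q where "eigenprefix n a es p qi j q" and "j < n" by auto
  from eigenprefix_Suc[OF assms this(2,1)] show ?case by blast
qed

lemma orthonormal_expansion_complete:
  assumes orth: "orthonormal n n q"
    and inverse: "\<forall>i<n. \<forall>m<n. (\<Sum>t=0..<n. p t i * qi t m) = (if i = m then 1 else 0)"
    and expand: "\<forall>t<n. \<forall>i<n. p t i = (\<Sum>l=0..<n. dot n (p t) (q l) * q l i)"
    and i: "i < n"
  shows "x i = (\<Sum>l=0..<n. dot n x (q l) * q l i)"
proof -
  define z where "z t = (\<Sum>m=0..<n. qi t m * x m)" for t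
  define g where "g l = (\<Sum>t=0..<n. z t * dot n (p t) (q l))" for l
  have x_expand: "x i = (\<Sum>l=0..<n. g l * q l i)" if i: "i < n" for i
  proof -
    have "x i = (\<Sum>m=0..<n. (\<Sum>t=0..<n. p t i * qi t m) * x m)"
      using inverse i by (simp add: if_distrib[of "\<lambda>c. c * _"] cong: if_cong)
    also have "\<dots> = (\<Sum>m=0..<n. \<Sum>t=0..<n. p t i * qi t m * x m)"
      by (simp add: sum_distrib_right)
    also have "\<dots> = (\<Sum>t=0..<n. \<Sum>m=0..<n. p t i * qi t m * x m)"
      by (rule sum.swap)
    also have "\<dots> = (\<Sum>t=0..<n. z t * p t i)"
      unfolding z_def sum_distrib_right by (simp add: mult_ac)
    also have "\<dots> = (\<Sum>t=0..<n. z t * (\<Sum>l=0..<n. dot n (p t) (q l) * q l i))"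
      using expand i by (intro sum.cong refl) auto
    also have "\<dots> = (\<Sum>t=0..<n. \<Sum>l=0..<n. z t * dot n (p t) (q l) * q l i)"
      by (simp add: sum_distrib_left mult.assoc)
    also have "\<dots> = (\<Sum>l=0..<n. \<Sum>t=0..<n. z t * dot n (p t) (q l) * q l i)"
      by (rule sum.swap)
    also have "\<dots> = (\<Sum>l=0..<n. g l * q l i)"
      unfolding g_def by (simp add: sum_distrib_right)
    finally show ?thesis .
  qed
  have "dot n x (q l) = g l" if "l < n" for l
    using x_expand by (intro orthonormal_coeff[OF orth that]) auto
  then show ?thesis using x_expand[OF i] by simp
qed

lemma orthonormal_eigenbasis_of_triangular:
  assumes sym: "\<forall>i<n. \<forall>j<n. a i j = a j i"
    and dual: "\<forall>r<n. \<forall>t<n. (\<Sum>m=0..<n. qi r m * p t m) = (if r = t then 1 else 0)"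
    and inverse: "\<forall>i<n. \<forall>m<n. (\<Sum>t=0..<n. p t i * qi t m) = (if i = m then 1 else 0)"
    and schur: "\<forall>t<n. \<forall>i<n. matvec n a (p t) i = es t * p t i + (\<Sum>s=0..<t. b s t * p s i)"
  obtains q where "orthonormal n n q" "\<forall>l<n. \<forall>i<n. matvec n a (q l) i = es l * q l i"
    "\<forall>x. \<forall>i<n. x i = (\<Sum>l=0..<n. dot n x (q l) * q l i)"
proof -
  obtain q where "eigenprefix n a es p qi n q"
    using eigenprefix_exists[OF sym dual schur, of n] by auto
  then have orth: "orthonormal n n q" and eig: "\<forall>l<n. \<forall>i<n. matvec n a (q l) i = es l * q l i"
    and expand: "\<forall>t<n. \<forall>i<n. p t i = (\<Sum>l=0..<n. dot n (p t) (q l) * q l i)"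
    unfolding eigenprefix_def by auto
  show ?thesis
    by (rule that[OF orth eig]) (intro allI impI orthonormal_expansion_complete[OF orth inverse expand])
qed

lemma index_mult_mat_square:
  assumes "A \<in> carrier_mat n n" "B \<in> carrier_mat n n" "i < n" "j < n"
  shows "(A * B) $$ (i,j) = (\<Sum>m=0..<n. A $$ (i,m) * B $$ (m,j))"
  using assms by (simp add: scalar_prod_def)

lemma schur_triangular_columns:
  fixes K :: "real mat"
  assumes K: "K \<in> carrier_mat n n" and cp: "char_poly K = (\<Prod>l\<leftarrow>ls. [:- l, 1:])"
  shows "\<exists>p qi b.
      (\<forall>r<n. \<forall>t<n. (\<Sum>m=0..<n. qi r m * p t m) = (if r = t then 1 else 0)) \<and>
      (\<forall>i<n. \<forall>m<n. (\<Sum>t=0..<n. p t i * qi t m) = (if i = m then 1 else 0)) \<and>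
      (\<forall>t<n. \<forall>i<n. matvec n (\<lambda>i j. K $$ (i,j)) (p t) i = ls ! t * p t i + (\<Sum>s=0..<t. b s t * p s i))"
proof -
  obtain B P Q where "schur_decomposition K ls = (B,P,Q)"
    by (cases "schur_decomposition K ls") auto
  from schur_decomposition[OF K cp this] have sim: "similar_mat_wit K B P Q"
    and ut: "upper_triangular B" and diag: "diag_mat B = ls" by auto
  from sim K have B: "B \<in> carrier_mat n n" and P: "P \<in> carrier_mat n n" and Q: "Q \<in> carrier_mat n n"
    and PQ: "P * Q = 1\<^sub>m n" and QP: "Q * P = 1\<^sub>m n" and KPBQ: "K = P * B * Q"
    unfolding similar_mat_wit_def Let_def by auto
  have KP: "K * P = P * B"
  proof -
    have "K * P = P * B * (Q * P)"
      using KPBQ P B Q by (simp add: assoc_mult_mat[of _ n n _ n _ n])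
    then show ?thesis using QP P B by simp
  qed
  define p where "p t i = P $$ (i,t)" for t i
  define qi where "qi r m = Q $$ (r,m)" for r m
  define b where "b s t = B $$ (s,t)" for s t
  have "(\<Sum>m=0..<n. qi r m * p t m) = (if r = t then 1 else 0)" if "r < n" "t < n" for r t
    using index_mult_mat_square[OF Q P that] QP that unfolding qi_def p_def by simp
  moreover have "(\<Sum>t=0..<n. p t i * qi t m) = (if i = m then 1 else 0)" if "i < n" "m < n" for i m
    using index_mult_mat_square[OF P Q that] PQ that unfolding qi_def p_def by simp
  moreover have "matvec n (\<lambda>i j. K $$ (i,j)) (p t) i = ls ! t * p t i + (\<Sum>s=0..<t. b s t * p s i)"
    if t: "t < n" and i: "i < n" for t i
  proof -
    have "matvec n (\<lambda>i j. K $$ (i,j)) (p t) i = (P * B) $$ (i,t)"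
      unfolding KP[symmetric] index_mult_mat_square[OF K P i t] matvec_def p_def ..
    also have "\<dots> = (\<Sum>s=0..<n. b s t * p s i)"
      unfolding index_mult_mat_square[OF P B i t] b_def p_def by (simp add: mult.commute)
    also have "\<dots> = (\<Sum>s=0..<Suc t. b s t * p s i) + (\<Sum>s=Suc t..<n. b s t * p s i)"
      by (rule sum.atLeastLessThan_concat[symmetric]) (use t in auto)
    also have "(\<Sum>s=Suc t..<n. b s t * p s i) = 0"
      using ut B unfolding upper_triangular_def b_def by (intro sum.neutral) auto
    also have "(\<Sum>s=0..<Suc t. b s t * p s i) = ls ! t * p t i + (\<Sum>s=0..<t. b s t * p s i)"
      using diag B t unfolding diag_mat_def b_def by auto
    finally show ?thesis by simp
  qed
  ultimately show ?thesis by blast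
qed

lemma symmetric_orthonormal_eigenbasis:
  fixes K :: "real mat"
  assumes K: "K \<in> carrier_mat n n" and sym: "\<forall>i<n. \<forall>j<n. K $$ (i,j) = K $$ (j,i)"
    and cp: "char_poly K = (\<Prod>l\<leftarrow>ls. [:- l, 1:])"
  obtains q where "orthonormal n n q"
    "\<forall>l<n. \<forall>i<n. matvec n (\<lambda>i j. K $$ (i,j)) (q l) i = ls ! l * q l i"
    "\<forall>x. \<forall>i<n. x i = (\<Sum>l=0..<n. dot n x (q l) * q l i)"
proof -
  obtain p qi b where
    "\<forall>r<n. \<forall>t<n. (\<Sum>m=0..<n. qi r m * p t m) = (if r = t then 1 else 0)"
    "\<forall>i<n. \<forall>m<n. (\<Sum>t=0..<n. p t i * qi t m) = (if i = m then 1 else 0)"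
    "\<forall>t<n. \<forall>i<n. matvec n (\<lambda>i j. K $$ (i,j)) (p t) i = ls ! t * p t i + (\<Sum>s=0..<t. b s t * p s i)"
    using schur_triangular_columns[OF K cp] by blast
  from orthonormal_eigenbasis_of_triangular[OF sym this that] show ?thesis .
qed

section \<open>The variational lower bound\<close>

lemma eigenvalue_le_rayleigh:
  assumes orth: "orthonormal n n q"
    and eig: "\<forall>l<n. \<forall>i<n. matvec n a (q l) i = ls ! l * q l i"
    and expand: "\<forall>x. \<forall>i<n. x i = (\<Sum>l=0..<n. dot n x (q l) * q l i)"
    and sorted: "sorted ls" "length ls = n"
    and perp: "\<forall>l<j. dot n x (q l) = 0"
  shows "ls ! j * dot n x x \<le> dot n x (matvec n a x)"
proof -
  define c where "c l = dot n x (q l)" for l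
  have "dot n x (matvec n a x) = dot n x (\<lambda>i. \<Sum>l=0..<n. (c l * ls ! l) * q l i)"
  proof (intro dot_cong refl)
    fix i assume i: "i < n"
    have "matvec n a x i = matvec n a (\<lambda>i. \<Sum>l=0..<n. c l * q l i) i"
      using expand unfolding c_def by (intro matvec_cong) auto
    also have "\<dots> = (\<Sum>l=0..<n. (c l * ls ! l) * q l i)"
      using eig i by (simp add: matvec_sum mult.assoc)
    finally show "matvec n a x i = \<dots>" .
  qed
  also have "\<dots> = (\<Sum>l=0..<n. ls ! l * (c l)\<^sup>2)"
    unfolding dot_sum_right[OF finite_atLeastLessThan] c_def by (simp add: power2_eq_square mult_ac)
  finally have quad: "dot n x (matvec n a x) = (\<Sum>l=0..<n. ls ! l * (c l)\<^sup>2)" .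
  have "dot n x x = dot n x (\<lambda>i. \<Sum>l=0..<n. c l * q l i)"
    using expand unfolding c_def by (intro dot_cong) auto
  also have "\<dots> = (\<Sum>l=0..<n. (c l)\<^sup>2)"
    unfolding dot_sum_right[OF finite_atLeastLessThan] c_def by (simp add: power2_eq_square)
  finally have norm: "dot n x x = (\<Sum>l=0..<n. (c l)\<^sup>2)" .
  have "ls ! j * (c l)\<^sup>2 \<le> ls ! l * (c l)\<^sup>2" if "l < n" for l
  proof (cases "l < j")
    case True then show ?thesis using perp unfolding c_def by simp
  next
    case False
    then have "ls ! j \<le> ls ! l" using sorted that by (intro sorted_nth_mono) auto
    then show ?thesis by (intro mult_right_mono) auto
  qed
  then show ?thesis unfolding quad norm sum_distrib_left by (intro sum_mono) auto
qed

lemma dot_indicator_left: "t < n \<Longrightarrow> dot n (\<lambda>i. if i = t then c else 0) z = c * z t"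
  unfolding dot_def by (simp add: if_distrib[of "\<lambda>u. u * _"] cong: if_cong)

lemma exists_supported_orthogonal:
  fixes w :: "nat \<Rightarrow> nat \<Rightarrow> real"
  assumes "finite T" "T \<subseteq> {0..<n}" "r < card T"
  shows "\<exists>x. (\<forall>i. i \<notin> T \<longrightarrow> x i = 0) \<and> (\<exists>i\<in>T. x i \<noteq> 0) \<and> (\<forall>l<r. dot n x (w l) = 0)"
  using assms
proof (induction r arbitrary: T w)
  case 0
  then obtain t where "t \<in> T" by (metis card.empty ex_in_conv less_nat_zero_code)
  then show ?case by (intro exI[of _ "\<lambda>i. if i = t then 1 else 0"]) auto
next
  case (Suc r)
  show ?case
  proof (cases "\<forall>t\<in>T. w r t = 0")
    case True
    obtain x where x: "\<forall>i. i \<notin> T \<longrightarrow> x i = 0" "\<exists>i\<in>T. x i \<noteq> 0" "\<forall>l<r. dot n x (w l) = 0"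
      using Suc.IH[of T w] Suc.prems by auto
    have "dot n x (w r) = 0"
      unfolding dot_def using x(1) True by (intro sum.neutral ballI) (metis mult_eq_0_iff)
    then show ?thesis using x by (auto simp: less_Suc_eq)
  next
    case False
    then obtain t where t: "t \<in> T" "w r t \<noteq> 0" by auto
    have "t < n" using t Suc.prems by auto
    \<comment> \<open>the \<open>w' l\<close> vanish at \<open>t\<close>, so a solution on \<open>T - {t}\<close> can be corrected at \<open>t\<close>\<close>
    define w' where "w' l i = w l i - (w l t / w r t) * w r i" for l i
    have "r < card (T - {t})" "finite (T - {t})" "T - {t} \<subseteq> {0..<n}"
      using t Suc.prems by auto
    then obtain y where y: "\<forall>i. i \<notin> T - {t} \<longrightarrow> y i = 0" "\<exists>i\<in>T - {t}. y i \<noteq> 0"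
        "\<forall>l<r. dot n y (w' l) = 0"
      using Suc.IH[of "T - {t}" w'] by blast
    define x where "x i = y i - (if i = t then dot n y (w r) / w r t else 0)" for i
    have dot_x: "dot n x z = dot n y z - dot n y (w r) / w r t * z t" for z
      unfolding x_def[abs_def] dot_diff_left dot_indicator_left[OF \<open>t < n\<close>] ..
    have "\<forall>l<Suc r. dot n x (w l) = 0"
    proof (intro allI impI)
      fix l assume "l < Suc r"
      show "dot n x (w l) = 0"
      proof (cases "l = r")
        case True then show ?thesis using dot_x[of "w r"] t by simp
      next
        case False
        then have "l < r" using \<open>l < Suc r\<close> by simp
        have "dot n y (w' l) = dot n y (w l) - (w l t / w r t) * dot n y (w r)"
          unfolding w'_def[abs_def] dot_diff_right dot_scale_right ..
        then show ?thesis using y(3) \<open>l < r\<close> dot_x[of "w l"] by (simp add: field_simps)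
      qed
    qed
    moreover have "\<forall>i. i \<notin> T \<longrightarrow> x i = 0"
      using y(1) t unfolding x_def by auto
    moreover have "\<exists>i\<in>T. x i \<noteq> 0"
      using y(2) unfolding x_def by auto
    ultimately show ?thesis by blast
  qed
qed

section \<open>The quadratic form of the Kirchhoff matrix\<close>

definition edge_count :: "(nat \<times> nat) list \<Rightarrow> nat \<Rightarrow> nat \<Rightarrow> nat" where
  "edge_count E i j = length (filter (\<lambda>e. e = (i,j) \<or> e = (j,i)) E)"

text \<open>A loop at \<open>v\<close> adds \<open>1\<close> to the degree of \<open>v\<close> but nothing to the adjacency matrix,
  so its contribution to \<open>x\<^sup>T K x\<close> is \<open>(x v)\<^sup>2\<close>.\<close>

definition edge_energy :: "(nat \<Rightarrow> real) \<Rightarrow> nat \<times> nat \<Rightarrow> real" where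
  "edge_energy x e = (if fst e = snd e then (x (fst e))\<^sup>2 else (x (fst e) - x (snd e))\<^sup>2)"

lemma kirchhoff_carrier: "kirchhoff n E \<in> carrier_mat n n"
  unfolding kirchhoff_def deg_mat_def adj_mat_def by auto

lemma kirchhoff_entry:
  assumes "i < n" "j < n"
  shows "kirchhoff n E $$ (i,j) = (if i = j then real (qdegree E i) else - real (edge_count E i j))"
  using assms unfolding kirchhoff_def deg_mat_def adj_mat_def edge_count_def by simp

lemma kirchhoff_symmetric: "\<forall>i<n. \<forall>j<n. kirchhoff n E $$ (i,j) = kirchhoff n E $$ (j,i)"
  by (auto simp: kirchhoff_entry edge_count_def disj_commute)

lemma kirchhoff_orthonormal_eigenbasis:
  assumes "sorted_eigenvalues (kirchhoff n E) ls"
  obtains q where "orthonormal n n q"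
    "\<forall>l<n. \<forall>i<n. matvec n (\<lambda>i j. kirchhoff n E $$ (i,j)) (q l) i = ls ! l * q l i"
    "\<forall>x. \<forall>i<n. x i = (\<Sum>l=0..<n. dot n x (q l) * q l i)"
proof -
  have "char_poly (kirchhoff n E) = (\<Prod>l\<leftarrow>ls. [:- l, 1:])"
    using assms unfolding sorted_eigenvalues_def by blast
  from symmetric_orthonormal_eigenbasis[OF kirchhoff_carrier kirchhoff_symmetric this that]
  show ?thesis .
qed

lemma qdegree_Cons: "qdegree (e # E) i = (if fst e = i \<or> snd e = i then 1 else 0) + qdegree E i"
  unfolding qdegree_def by (cases e) auto

lemma edge_count_Cons:
  "edge_count (e # E) i j = (if e = (i,j) \<or> e = (j,i) then 1 else 0) + edge_count E i j"
  unfolding edge_count_def by auto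

lemma degree_quadratic_sum:
  assumes "\<forall>(v,w) \<in> set E. v < n \<and> w < n"
  shows "(\<Sum>i=0..<n. real (qdegree E i) * (x i)\<^sup>2) =
    (\<Sum>e\<leftarrow>E. if fst e = snd e then (x (fst e))\<^sup>2 else (x (fst e))\<^sup>2 + (x (snd e))\<^sup>2)"
  using assms
proof (induction E)
  case Nil
  then show ?case by (simp add: qdegree_def)
next
  case (Cons e E)
  obtain v w where e: "e = (v,w)" by (cases e)
  have vw: "v < n" "w < n" using Cons.prems e by auto
  have "(\<Sum>i=0..<n. real (qdegree (e # E) i) * (x i)\<^sup>2) =
     (\<Sum>i=0..<n. (if v = i \<or> w = i then (x i)\<^sup>2 else 0)) + (\<Sum>i=0..<n. real (qdegree E i) * (x i)\<^sup>2)"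
    unfolding sum.distrib[symmetric] by (intro sum.cong refl) (simp add: qdegree_Cons e distrib_right)
  also have "(\<Sum>i=0..<n. (if v = i \<or> w = i then (x i)\<^sup>2 else 0)) =
      (if v = w then (x v)\<^sup>2 else (x v)\<^sup>2 + (x w)\<^sup>2)"
  proof (cases "v = w")
    case False
    have "(\<Sum>i=0..<n. (if v = i \<or> w = i then (x i)\<^sup>2 else 0)) =
       (\<Sum>i=0..<n. (if v = i then (x i)\<^sup>2 else 0) + (if w = i then (x i)\<^sup>2 else 0))"
      using False by (intro sum.cong refl) auto
    then show ?thesis using False vw by (simp add: sum.distrib)
  qed (use vw in simp)
  finally show ?case using Cons e by simp
qed

lemma double_sum_delta:
  fixes v w n :: nat and f :: "nat \<Rightarrow> nat \<Rightarrow> real"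
  assumes "v < n" "w < n"
  shows "(\<Sum>i=0..<n. \<Sum>j=0..<n. if i = v \<and> j = w then f i j else 0) = f v w"
proof -
  have "(\<Sum>j=0..<n. if i = v \<and> j = w then f i j else 0) = (if i = v then f v w else 0)" for i
    using assms by (cases "i = v") auto
  then show ?thesis using assms by simp
qed

lemma adjacency_quadratic_sum:
  assumes "\<forall>(v,w) \<in> set E. v < n \<and> w < n"
  shows "(\<Sum>i=0..<n. \<Sum>j=0..<n. (if i = j then 0 else real (edge_count E i j)) * x i * x j) =
    (\<Sum>e\<leftarrow>E. if fst e = snd e then 0 else 2 * x (fst e) * x (snd e))"
  using assms
proof (induction E)
  case Nil
  then show ?case by (simp add: edge_count_def)
next
  case (Cons e E)
  obtain v w where e: "e = (v,w)" by (cases e)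
  have vw: "v < n" "w < n" using Cons.prems e by auto
  let ?new = "\<lambda>i j. if i \<noteq> j \<and> ((v,w) = (i,j) \<or> (v,w) = (j,i)) then x i * x j else 0"
  have "(\<Sum>i=0..<n. \<Sum>j=0..<n. (if i = j then 0 else real (edge_count (e#E) i j)) * x i * x j) =
     (\<Sum>i=0..<n. \<Sum>j=0..<n. ?new i j) +
     (\<Sum>i=0..<n. \<Sum>j=0..<n. (if i = j then 0 else real (edge_count E i j)) * x i * x j)"
    unfolding sum.distrib[symmetric]
    by (intro sum.cong refl) (simp add: edge_count_Cons e distrib_right)
  also have "(\<Sum>i=0..<n. \<Sum>j=0..<n. ?new i j) = (if v = w then 0 else 2 * x v * x w)"
  proof (cases "v = w")
    case False
    have "(\<Sum>i=0..<n. \<Sum>j=0..<n. ?new i j) = (\<Sum>i=0..<n. \<Sum>j=0..<n.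
        (if i = v \<and> j = w then x i * x j else 0) + (if i = w \<and> j = v then x i * x j else 0))"
      using False by (intro sum.cong refl) auto
    also have "\<dots> = x v * x w + x w * x v"
      using double_sum_delta[OF vw, of "\<lambda>i j. x i * x j"]
        double_sum_delta[OF vw(2,1), of "\<lambda>i j. x i * x j"]
      by (simp only: sum.distrib)
    finally show ?thesis using False by simp
  qed (auto intro!: sum.neutral)
  finally show ?case using Cons e by simp
qed

lemma kirchhoff_quadratic_form:
  assumes "quiver n E"
  shows "dot n x (matvec n (\<lambda>i j. kirchhoff n E $$ (i,j)) x) = (\<Sum>e\<leftarrow>E. edge_energy x e)"
proof -
  have E: "\<forall>(v,w) \<in> set E. v < n \<and> w < n" using assms unfolding quiver_def by auto
  have "dot n x (matvec n (\<lambda>i j. kirchhoff n E $$ (i,j)) x) =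
     (\<Sum>i=0..<n. \<Sum>j=0..<n. x i * kirchhoff n E $$ (i,j) * x j)"
    unfolding dot_def matvec_def by (simp add: sum_distrib_left mult.assoc)
  also have "\<dots> = (\<Sum>i=0..<n. \<Sum>j=0..<n. (if i = j then real (qdegree E i) * x i * x j else 0)
       - (if i = j then 0 else real (edge_count E i j)) * x i * x j)"
    by (intro sum.cong refl) (auto simp: kirchhoff_entry)
  also have "\<dots> = (\<Sum>i=0..<n. real (qdegree E i) * (x i)\<^sup>2)
      - (\<Sum>i=0..<n. \<Sum>j=0..<n. (if i = j then 0 else real (edge_count E i j)) * x i * x j)"
    by (simp add: sum_subtractf power2_eq_square mult.assoc)
  also have "\<dots> = (\<Sum>e\<leftarrow>E. edge_energy x e)"
    unfolding degree_quadratic_sum[OF E] adjacency_quadratic_sum[OF E] edge_energy_def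
    by (simp add: sum_list_subtractf[symmetric] power2_diff cong: if_cong)
      (rule arg_cong[where f=sum_list], rule map_cong, auto)
  finally show ?thesis .
qed

section \<open>The upper bound by degrees\<close>

lemma sq_diff_le_cauchy_schwarz:
  fixes a b p q :: real
  assumes "p > 0" "q > 0"
  shows "(a - b)\<^sup>2 \<le> (p + q) * (a\<^sup>2 / p + b\<^sup>2 / q)"
proof -
  have "(p + q) * (a\<^sup>2 / p + b\<^sup>2 / q) - (a - b)\<^sup>2 = (a * q + b * p)\<^sup>2 / (p * q)"
    using assms by (simp add: field_simps power2_eq_square)
  moreover have "(a * q + b * p)\<^sup>2 / (p * q) \<ge> 0" using assms by simp
  ultimately show ?thesis by linarith
qed

lemma sq_le_scaled:
  fixes a p c :: real
  assumes "p > 0" "c \<ge> 0" "a \<noteq> 0 \<Longrightarrow> p \<le> c"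
  shows "a\<^sup>2 \<le> c * (a\<^sup>2 / p)"
proof (cases "a = 0")
  case False
  have "a\<^sup>2 = p * (a\<^sup>2 / p)" using assms(1) by simp
  also have "\<dots> \<le> c * (a\<^sup>2 / p)" using assms False by (intro mult_right_mono) auto
  finally show ?thesis .
qed simp

lemma sq_diff_le_scaled:
  fixes a b p q c :: real
  assumes "p > 0" "q > 0" "c \<ge> 0" "a \<noteq> 0 \<Longrightarrow> p \<le> c" "b \<noteq> 0 \<Longrightarrow> q \<le> c"
    and "a \<noteq> 0 \<Longrightarrow> b \<noteq> 0 \<Longrightarrow> p + q \<le> c"
  shows "(a - b)\<^sup>2 \<le> c * (a\<^sup>2 / p + b\<^sup>2 / q)"
proof (cases "a = 0 \<or> b = 0")
  case True
  then show ?thesis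
    using sq_le_scaled[of p c a] sq_le_scaled[of q c b] assms by (auto simp: distrib_left)
next
  case False
  have "(a - b)\<^sup>2 \<le> (p + q) * (a\<^sup>2 / p + b\<^sup>2 / q)"
    using assms(1,2) by (rule sq_diff_le_cauchy_schwarz)
  also have "\<dots> \<le> c * (a\<^sup>2 / p + b\<^sup>2 / q)"
    using assms False by (intro mult_right_mono) auto
  finally show ?thesis .
qed

lemma qdegree_pos: "e \<in> set E \<Longrightarrow> fst e = i \<or> snd e = i \<Longrightarrow> 0 < qdegree E i"
  unfolding qdegree_def by (auto simp: filter_empty_conv case_prod_beta)

lemma sum_list_incident:
  "(\<Sum>e\<leftarrow>E. if fst e = i \<or> snd e = i then c else 0) = real (qdegree E i) * (c :: real)"
  by (induction E) (auto simp: qdegree_def distrib_right)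

lemma sum_list_sum_swap: "(\<Sum>e\<leftarrow>E. \<Sum>i\<in>A. f e i) = (\<Sum>i\<in>A. \<Sum>e\<leftarrow>E. (f e i :: real))"
  by (induction E) (auto simp: sum.distrib)

text \<open>Each vertex \<open>i\<close> is charged \<open>x\<^sub>i\<^sup>2 / d\<^sub>i\<close> by each of its \<open>d\<^sub>i\<close> incident edges
  (an isolated vertex is charged \<open>x\<^sub>i\<^sup>2 / 0 = 0\<close>, which is harmless).\<close>

lemma edge_energy_sum_le:
  assumes quiver: "quiver n E" and c: "c \<ge> 0"
    and deg: "\<forall>v. x v \<noteq> 0 \<longrightarrow> real (qdegree E v) \<le> c"
    and deg2: "\<forall>v w. v \<noteq> w \<longrightarrow> x v \<noteq> 0 \<longrightarrow> x w \<noteq> 0 \<longrightarrow> real (qdegree E v) + real (qdegree E w) \<le> c"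
  shows "(\<Sum>e\<leftarrow>E. edge_energy x e) \<le> c * dot n x x"
proof -
  define y where "y i = (x i)\<^sup>2 / real (qdegree E i)" for i
  have edge: "edge_energy x e \<le> c * (\<Sum>i=0..<n. if fst e = i \<or> snd e = i then y i else 0)"
    if e: "e \<in> set E" for e
  proof -
    obtain v w where vw: "e = (v,w)" by (cases e)
    have n: "v < n" "w < n" using quiver e vw unfolding quiver_def by auto
    have pos: "real (qdegree E v) > 0" "real (qdegree E w) > 0" using qdegree_pos[OF e] vw by auto
    show ?thesis
    proof (cases "v = w")
      case True
      have "(x v)\<^sup>2 \<le> c * y v" unfolding y_def using pos c deg by (intro sq_le_scaled) auto
      then show ?thesis using vw True n by (simp add: edge_energy_def)
    next
      case False
      have "(\<Sum>i=0..<n. if v = i \<or> w = i then y i else 0)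
          = (\<Sum>i=0..<n. (if v = i then y i else 0) + (if w = i then y i else 0))"
        using False by (intro sum.cong refl) auto
      also have "\<dots> = y v + y w" using n by (simp add: sum.distrib)
      finally have "(\<Sum>i=0..<n. if v = i \<or> w = i then y i else 0) = y v + y w" .
      moreover have "(x v - x w)\<^sup>2 \<le> c * (y v + y w)"
        unfolding y_def using pos c deg deg2 False by (intro sq_diff_le_scaled) auto
      ultimately show ?thesis using vw False by (simp add: edge_energy_def)
    qed
  qed
  have "(\<Sum>e\<leftarrow>E. edge_energy x e) \<le> (\<Sum>e\<leftarrow>E. c * (\<Sum>i=0..<n. if fst e = i \<or> snd e = i then y i else 0))"
    using edge by (rule sum_list_mono)
  also have "\<dots> = c * (\<Sum>i=0..<n. real (qdegree E i) * y i)"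
    by (simp add: sum_list_const_mult sum_list_sum_swap sum_list_incident)
  also have "\<dots> \<le> c * (\<Sum>i=0..<n. (x i)\<^sup>2)"
    unfolding y_def using c by (intro mult_left_mono sum_mono) auto
  finally show ?thesis by (simp add: dot_def power2_eq_square)
qed

lemma sort_map_eq_map_sort_key: "sort (map f xs) = map f (sort_key f xs)"
  for f :: "'a \<Rightarrow> 'b :: linorder"
  by (rule properties_for_sort) (simp_all add: sorted_sort_key mset_map)

lemma sorted_nth_add_le:
  fixes xs :: "'a :: {linorder, ordered_ab_semigroup_add} list"
  assumes "sorted xs" "k \<le> length xs" "i < k" "j < k" "i \<noteq> j"
  shows "xs ! i + xs ! j \<le> xs ! (k - 1) + xs ! (k - 2)"
proof -
  have mono: "xs ! a \<le> xs ! b" if "a \<le> b" "b < k" for a b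
    using assms(1,2) that by (intro sorted_nth_mono) auto
  consider "i \<le> k - 2" "j \<le> k - 1" | "i \<le> k - 1" "j \<le> k - 2" using assms(3-5) by linarith
  then show ?thesis
  proof cases
    case 1
    then have "xs ! j + xs ! i \<le> xs ! (k - 1) + xs ! (k - 2)"
      using assms(3) by (intro add_mono mono) auto
    then show ?thesis by (simp add: add.commute)
  next
    case 2
    then show ?thesis using assms(4) by (intro add_mono mono) auto
  qed
qed

lemma lowest_degree_vertices:
  fixes f :: "nat \<Rightarrow> nat"
  assumes k: "k \<in> {1..n}"
  defines "ds \<equiv> sort (map f [0..<n])"
  defines "c \<equiv> real (ds ! (k - 1)) + (if k = 1 then 0 else real (ds ! (k - 2)))"
  obtains T where "T \<subseteq> {0..<n}" "card T = k" "\<forall>v\<in>T. real (f v) \<le> c"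
    "\<forall>v\<in>T. \<forall>w\<in>T. v \<noteq> w \<longrightarrow> real (f v) + real (f w) \<le> c"
proof -
  define vs where "vs = sort_key f [0..<n]"
  have ds: "ds = map f vs" unfolding ds_def vs_def by (rule sort_map_eq_map_sort_key)
  have vs: "distinct vs" "set vs = {0..<n}" "length vs = n"
    unfolding vs_def by (auto simp: distinct_sort set_sort length_sort)
  have sorted: "sorted ds" "length ds = n" unfolding ds_def by simp_all
  define T where "T = set (take k vs)"
  have pos: "\<exists>i<k. v = vs ! i \<and> f v = ds ! i" if "v \<in> T" for v
    using that k vs(3) unfolding T_def ds by (auto simp: in_set_conv_nth)
  show ?thesis
  proof (rule that[of T])
    show "T \<subseteq> {0..<n}" unfolding T_def using set_take_subset[of k vs] vs(2) by simp
    show "card T = k" unfolding T_def using vs k by (simp add: distinct_card)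
    show "\<forall>v\<in>T. real (f v) \<le> c"
    proof
      fix v assume "v \<in> T"
      then obtain i where "i < k" "f v = ds ! i" using pos by blast
      then have "f v \<le> ds ! (k - 1)" using sorted k by (auto intro: sorted_nth_mono)
      then show "real (f v) \<le> c" unfolding c_def by (cases "k = 1") auto
    qed
    show "\<forall>v\<in>T. \<forall>w\<in>T. v \<noteq> w \<longrightarrow> real (f v) + real (f w) \<le> c"
    proof (intro ballI impI)
      fix v w assume "v \<in> T" "w \<in> T" "v \<noteq> w"
      then obtain i j where "i < k" "j < k" "i \<noteq> j" "f v = ds ! i" "f w = ds ! j"
        using pos by metis
      then have "f v + f w \<le> ds ! (k - 1) + ds ! (k - 2)" "k \<noteq> 1"
        using sorted_nth_add_le[OF sorted(1)] sorted(2) k by auto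
      then show "real (f v) + real (f w) \<le> c"
        unfolding c_def by (simp flip: of_nat_add del: of_nat_add)
    qed
  qed
qed

theorem theorem1:
  fixes n :: nat and E :: "(nat \<times> nat) list" and ls :: "real list"
  assumes "n \<ge> 1"
    and "quiver n E"
    and "sorted_eigenvalues (kirchhoff n E) ls"
  shows "\<forall>k \<in> {1..n}.
     ls ! (k - 1) \<le> real (sorted_degrees n E ! (k - 1))
        + (if k = 1 then 0 else real (sorted_degrees n E ! (k - 2)))"
proof
  fix k assume k: "k \<in> {1..n}"
  define c where
    "c = real (sorted_degrees n E ! (k - 1)) + (if k = 1 then 0 else real (sorted_degrees n E ! (k - 2)))"
  from assms(3) have sorted: "sorted ls" "length ls = n"
    unfolding sorted_eigenvalues_def using carrier_matD(1)[OF kirchhoff_carrier] by simp_all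
  obtain q where orth: "orthonormal n n q"
    and eig: "\<forall>l<n. \<forall>i<n. matvec n (\<lambda>i j. kirchhoff n E $$ (i,j)) (q l) i = ls ! l * q l i"
    and expand: "\<forall>x. \<forall>i<n. x i = (\<Sum>l=0..<n. dot n x (q l) * q l i)"
    by (rule kirchhoff_orthonormal_eigenbasis[OF assms(3)])
  obtain T where T: "T \<subseteq> {0..<n}" "card T = k" and deg: "\<forall>v\<in>T. real (qdegree E v) \<le> c"
    and deg2: "\<forall>v\<in>T. \<forall>w\<in>T. v \<noteq> w \<longrightarrow> real (qdegree E v) + real (qdegree E w) \<le> c"
    by (rule lowest_degree_vertices[OF k, where f = "qdegree E", folded sorted_degrees_def, folded c_def])
  have "c \<ge> 0" unfolding c_def by simp
  have "finite T" "k - 1 < card T" using T k finite_subset by auto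
  from exists_supported_orthogonal[OF this(1) T(1) this(2)] obtain x
    where x: "\<forall>i. i \<notin> T \<longrightarrow> x i = 0" "\<exists>i\<in>T. x i \<noteq> 0" "\<forall>l<k - 1. dot n x (q l) = 0"
    by blast
  have "ls ! (k - 1) * dot n x x \<le> dot n x (matvec n (\<lambda>i j. kirchhoff n E $$ (i,j)) x)"
    by (rule eigenvalue_le_rayleigh[OF orth eig expand sorted x(3)])
  also have "\<dots> = (\<Sum>e\<leftarrow>E. edge_energy x e)"
    by (rule kirchhoff_quadratic_form[OF assms(2)])
  also have "\<dots> \<le> c * dot n x x"
    by (rule edge_energy_sum_le[OF assms(2) \<open>c \<ge> 0\<close>]) (use deg deg2 x(1) in blast)+
  finally have "ls ! (k - 1) * dot n x x \<le> c * dot n x x" .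
  moreover have "dot n x x > 0" using x(2) T(1) dot_self_pos[of _ n x] by fastforce
  ultimately show "ls ! (k - 1) \<le> c" by simp
qed

end
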